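(* For every integer $n\ge 0$, the number of Retakh Dyck paths of semilength $n$ (equivalently, the number of Retakh plane trees with $n+1$ nodes) equals the Motzkin number $M_n$. Equivalently, if $T(z)=\sum_{\tau}z^{|\tau|}$ is the generating function of Retakh plane trees by number of nodes $|\tau|$, then $T(z)=zM(z)$, where $M(z)=\sum_{n\ge0}M_nz^n=\frac{1-z-\sqrt{1-2z-3z^2}}{2z^2}$ is the unique power series solution of $M=1+zM+z^2M^2$. Moreover, let $F(z)$ be the generating function, by number of nodes, of plane trees with at least two nodes in which every leaf lies at odd depth, and let $G(z)$ be the generating function, by number of nodes, of plane trees in which every leaf lies at even depth (the one-node tree is included, its root being a leaf at depth $0$). Then $F=\frac{zG}{1-G}$, $G=\frac{z}{1-F}$, and $F(z)=z^2M(z)$.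
   Context: A Dyck path of semilength $n$ is a lattice path from $(0,0)$ to $(2n,0)$ with up-steps $(1,1)$ and down-steps $(1,-1)$ that never goes below the $x$-axis. A peak is an up-step immediately followed by a down-step; its level is the height of the point between them. A Retakh Dyck path is a Dyck path all of whose peaks are at level $1$ or at an even level. Under the standard bijection between Dyck paths of semilength $n$ and plane (ordered rooted) trees with $n+1$ nodes, the peaks correspond to the non-root leaves and the level of a peak equals the depth of the leaf (the root has depth $0$). A Retakh plane tree is a plane tree in which every non-root leaf has depth $1$ or even depth; the one-node tree is included, corresponding to the empty path. $M_n$ denotes the $n$-th Motzkin number. *)

theory Defs
  imports "HOL-Computational_Algebra.Formal_Power_Series"
begin

fun motzkin :: "nat \<Rightarrow> nat" where
  "motzkin 0 = 1"
| "motzkin (Suc n) = motzkin n + (\<Sum>k<n. motzkin k * motzkin (n - 1 - k))"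

definition motzkin_fps :: "rat fps" where
  "motzkin_fps = Abs_fps (\<lambda>n. of_nat (motzkin n))"

section \<open>Dyck paths (True = up-step, False = down-step)\<close>

definition height :: "bool list \<Rightarrow> int" where
  "height xs = int (count_list xs True) - int (count_list xs False)"

definition dyck_path :: "bool list \<Rightarrow> bool" where
  "dyck_path xs \<longleftrightarrow> (\<forall>k\<le>length xs. height (take k xs) \<ge> 0) \<and> height xs = 0"

definition is_peak :: "bool list \<Rightarrow> nat \<Rightarrow> bool" where
  "is_peak xs i \<longleftrightarrow> Suc i < length xs \<and> xs ! i \<and> \<not> xs ! Suc i"

definition peak_level :: "bool list \<Rightarrow> nat \<Rightarrow> int" where
  "peak_level xs i = height (take (Suc i) xs)"

definition retakh_path :: "bool list \<Rightarrow> bool" where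
  "retakh_path xs \<longleftrightarrow> dyck_path xs \<and>
     (\<forall>i. is_peak xs i \<longrightarrow> peak_level xs i = 1 \<or> even (peak_level xs i))"

definition retakh_paths :: "nat \<Rightarrow> bool list set" where
  "retakh_paths n = {xs. length xs = 2 * n \<and> retakh_path xs}"

datatype ptree = Node "ptree list"

fun nodes :: "ptree \<Rightarrow> nat" where
  "nodes (Node ts) = Suc (sum_list (map nodes ts))"

fun leaf_depths :: "nat \<Rightarrow> ptree \<Rightarrow> nat set" where
  "leaf_depths d (Node ts) =
     (if ts = [] then {d} else \<Union> (set (map (leaf_depths (Suc d)) ts)))"

text \<open>Retakh plane tree: every non-root leaf has depth 1 or even depth. A leaf at
  depth 0 can only be the root (of the one-node tree), which is excluded.\<close>
definition retakh_tree :: "ptree \<Rightarrow> bool" where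
  "retakh_tree t \<longleftrightarrow> (\<forall>d\<in>leaf_depths 0 t. d \<noteq> 0 \<longrightarrow> d = 1 \<or> even d)"

definition odd_leaf_tree :: "ptree \<Rightarrow> bool" where
  "odd_leaf_tree t \<longleftrightarrow> nodes t \<ge> 2 \<and> (\<forall>d\<in>leaf_depths 0 t. odd d)"

definition even_leaf_tree :: "ptree \<Rightarrow> bool" where
  "even_leaf_tree t \<longleftrightarrow> (\<forall>d\<in>leaf_depths 0 t. even d)"

definition tree_gf :: "(ptree \<Rightarrow> bool) \<Rightarrow> rat fps" where
  "tree_gf P = Abs_fps (\<lambda>n. of_nat (card {t. nodes t = n \<and> P t}))"

end

theory Submission
  imports Defs
begin

text \<open>Cutting a plane tree at its root, the children of a tree with all leaves at even depth
  have all leaves at odd depth and vice versa, while the children of a Retakh tree are leaves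
  or trees with all leaves at odd depth. A sequence of subtrees counted by \<open>A\<close> is counted by
  \<open>1/(1 - A)\<close>, so \<open>G = z/(1 - F)\<close>, \<open>F = zG/(1 - G)\<close> and \<open>T = z/(1 - z - F)\<close>.
  Eliminating \<open>G\<close> gives \<open>F = z\<^sup>2 + zF + F\<^sup>2\<close>, which has only one solution without constant
  term; \<open>z\<^sup>2M\<close> is one by the Motzkin equation, and then \<open>T = zM\<close>. For the paths, the standard
  encoding of plane trees as Dyck paths turns the depths of the non-root leaves into the
  levels of the peaks.\<close>

section \<open>Counting trees and forests\<close>

lemma nodes_neq_0 [simp]: "nodes t \<noteq> 0"
  by (cases t) auto

lemma nodes_eq_Suc_0_iff: "nodes t = Suc 0 \<longleftrightarrow> t = Node []"
  by (cases t, rename_tac ts, case_tac ts) auto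

lemma length_le_sum_nodes: "length ts \<le> sum_list (map nodes ts)"
proof (induction ts)
  case (Cons t ts)
  have "Suc 0 \<le> nodes t" using nodes_neq_0[of t] by linarith
  with Cons.IH show ?case by simp
qed simp

lemma finite_nodes_le: "finite {t. nodes t \<le> n}"
proof (induction n)
  case 0
  then show ?case by simp
next
  case (Suc n)
  let ?L = "{ts. set ts \<subseteq> {t. nodes t \<le> n} \<and> length ts \<le> n}"
  have "{t. nodes t \<le> Suc n} \<subseteq> Node ` ?L"
  proof
    fix t assume "t \<in> {t. nodes t \<le> Suc n}"
    then obtain ts where t: "t = Node ts" and sum: "sum_list (map nodes ts) \<le> n"
      by (cases t) auto
    then have "set ts \<subseteq> {t. nodes t \<le> n}"
      using member_le_sum_list[of _ "map nodes ts"] by force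
    with t sum length_le_sum_nodes[of ts] show "t \<in> Node ` ?L" by auto
  qed
  then show ?case using finite_lists_length_le[OF Suc.IH] finite_subset by blast
qed

lemma fps_divide_eq_mult_right_inverse:
  fixes f g h :: "'a::field fps"
  assumes "f * g = 1"
  shows "h / f = h * g"
proof -
  have "fps_nth f 0 \<noteq> 0" using arg_cong[OF assms, of "\<lambda>p. fps_nth p 0"] by auto
  with fps_inverse_unique[OF assms] show ?thesis by (simp add: fps_divide_unit)
qed

definition trees :: "(ptree \<Rightarrow> bool) \<Rightarrow> nat \<Rightarrow> ptree set" where
  "trees P n = {t. nodes t = n \<and> P t}"

definition forests :: "(ptree \<Rightarrow> bool) \<Rightarrow> nat \<Rightarrow> ptree list set" where
  "forests P n = {ts. sum_list (map nodes ts) = n \<and> list_all P ts}"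

definition forest_gf :: "(ptree \<Rightarrow> bool) \<Rightarrow> rat fps" where
  "forest_gf P = Abs_fps (\<lambda>n. of_nat (card (forests P n)))"

lemma tree_gf_nth: "fps_nth (tree_gf P) n = of_nat (card (trees P n))"
  by (simp add: tree_gf_def trees_def)

lemma finite_trees: "finite (trees P n)"
  unfolding trees_def by (rule finite_subset[OF _ finite_nodes_le[of n]]) auto

lemma trees_0: "trees P 0 = {}"
  by (auto simp: trees_def)

lemma tree_gf_nth_0: "fps_nth (tree_gf P) 0 = 0"
  by (simp add: tree_gf_nth trees_0)

lemma finite_forests: "finite (forests P n)"
proof (rule finite_subset[OF _ finite_lists_length_le[OF finite_nodes_le[of n], of n]])
  show "forests P n \<subseteq> {ts. set ts \<subseteq> {t. nodes t \<le> n} \<and> length ts \<le> n}"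
    unfolding forests_def
    using member_le_sum_list[of _ "map nodes _"] length_le_sum_nodes by force
qed

lemma forests_0: "forests P 0 = {[]}"
  by (auto simp: forests_def neq_Nil_conv)

lemma forests_Suc:
  "forests P (Suc n) = (\<lambda>(t, ts). t # ts) ` (\<Union>k\<le>Suc n. trees P k \<times> forests P (Suc n - k))"
proof
  show "forests P (Suc n) \<subseteq> (\<lambda>(t, ts). t # ts) ` (\<Union>k\<le>Suc n. trees P k \<times> forests P (Suc n - k))"
  proof
    fix xs assume xs: "xs \<in> forests P (Suc n)"
    then obtain t ts where "xs = t # ts" unfolding forests_def by (cases xs) auto
    with xs show "xs \<in> (\<lambda>(t, ts). t # ts) ` (\<Union>k\<le>Suc n. trees P k \<times> forests P (Suc n - k))"
      unfolding forests_def trees_def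
      by (auto intro!: image_eqI[where x="(t, ts)"] bexI[where x="nodes t"])
  qed
qed (auto simp: forests_def trees_def)

lemma card_forests_Suc:
  "card (forests P (Suc n)) = (\<Sum>k\<le>Suc n. card (trees P k) * card (forests P (Suc n - k)))"
proof -
  have "card (forests P (Suc n)) = card (\<Union>k\<le>Suc n. trees P k \<times> forests P (Suc n - k))"
    unfolding forests_Suc by (rule card_image) (auto simp: inj_on_def)
  also have "\<dots> = (\<Sum>k\<le>Suc n. card (trees P k \<times> forests P (Suc n - k)))"
    by (rule card_UN_disjoint) (use finite_trees finite_forests in \<open>auto simp: trees_def\<close>)
  finally show ?thesis by (simp add: card_cartesian_product)
qed

lemma forest_gf_eq: "forest_gf P = 1 + tree_gf P * forest_gf P"
proof (rule fps_ext)
  fix n show "fps_nth (forest_gf P) n = fps_nth (1 + tree_gf P * forest_gf P) n"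
    by (cases n) (simp_all add: forest_gf_def tree_gf_nth forests_0 trees_0 fps_mult_nth
        card_forests_Suc atLeast0AtMost)
qed

lemma one_minus_tree_gf_mult_forest_gf: "(1 - tree_gf P) * forest_gf P = 1"
  using forest_gf_eq[of P] by (simp add: algebra_simps)

lemma tree_gf_Node_forest:
  assumes "\<And>ts. Q (Node ts) \<longleftrightarrow> list_all P ts"
  shows "tree_gf Q = fps_X / (1 - tree_gf P)"
proof -
  have "trees Q (Suc n) = Node ` forests P n" for n
  proof
    show "trees Q (Suc n) \<subseteq> Node ` forests P n"
    proof
      fix t assume "t \<in> trees Q (Suc n)"
      then show "t \<in> Node ` forests P n"
        by (cases t) (auto simp: trees_def forests_def assms)
    qed
  qed (auto simp: trees_def forests_def assms)
  then have "card (trees Q (Suc n)) = card (forests P n)" for n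
    by (simp add: card_image inj_on_def)
  then have "tree_gf Q = fps_X * forest_gf P"
    by (intro fps_ext, rename_tac n, case_tac n) (simp_all add: tree_gf_nth forest_gf_def trees_0)
  then show ?thesis
    by (simp add: fps_divide_eq_mult_right_inverse[OF one_minus_tree_gf_mult_forest_gf])
qed

lemma tree_gf_leaf_or:
  assumes "\<not> P (Node [])"
  shows "tree_gf (\<lambda>t. t = Node [] \<or> P t) = fps_X + tree_gf P"
proof -
  have "trees (\<lambda>t. t = Node [] \<or> P t) n = (if n = 1 then {Node []} else trees P n)"
    and "trees P 1 = {}" for n
    using assms by (auto simp: trees_def nodes_eq_Suc_0_iff)
  then show ?thesis
    by (intro fps_ext) (simp add: tree_gf_nth fps_X_nth)
qed

lemma tree_gf_Node_nonempty_forest: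
  assumes Q: "\<And>ts. Q (Node ts) \<longleftrightarrow> ts \<noteq> [] \<and> list_all P ts"
  shows "tree_gf Q = fps_X * tree_gf P / (1 - tree_gf P)"
proof -
  have "fps_X + tree_gf Q = tree_gf (\<lambda>t. t = Node [] \<or> Q t)"
    using Q by (simp add: tree_gf_leaf_or)
  also have "\<dots> = fps_X / (1 - tree_gf P)"
    by (rule tree_gf_Node_forest, rename_tac ts, case_tac ts) (simp_all add: Q)
  also have "\<dots> = fps_X * forest_gf P"
    by (rule fps_divide_eq_mult_right_inverse[OF one_minus_tree_gf_mult_forest_gf])
  also have "\<dots> = fps_X + fps_X * tree_gf P * forest_gf P"
    by (subst forest_gf_eq) (simp add: algebra_simps)
  finally show ?thesis
    by (simp add: fps_divide_eq_mult_right_inverse[OF one_minus_tree_gf_mult_forest_gf])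
qed

section \<open>Leaf depths\<close>

lemma leaf_depths_Suc: "leaf_depths (Suc d) t = Suc ` leaf_depths d t"
proof (induction t arbitrary: d)
  case (Node ts)
  then show ?case by (auto simp: image_UN)
qed

lemma odd_leaf_tree_iff: "odd_leaf_tree t \<longleftrightarrow> (\<forall>d\<in>leaf_depths 0 t. odd d)"
proof (cases t)
  case (Node ts)
  then show ?thesis
    by (cases ts) (auto simp: odd_leaf_tree_def nodes_eq_Suc_0_iff Suc_le_eq)
qed

lemma even_leaf_tree_Node: "even_leaf_tree (Node ts) \<longleftrightarrow> list_all odd_leaf_tree ts"
  by (cases "ts = []") (auto simp: even_leaf_tree_def leaf_depths_Suc odd_leaf_tree_iff list_all_iff)

lemma odd_leaf_tree_Node: "odd_leaf_tree (Node ts) \<longleftrightarrow> ts \<noteq> [] \<and> list_all even_leaf_tree ts"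
  by (cases "ts = []") (auto simp: even_leaf_tree_def leaf_depths_Suc odd_leaf_tree_iff list_all_iff)

lemma retakh_tree_Node:
  "retakh_tree (Node ts) \<longleftrightarrow> list_all (\<lambda>t. t = Node [] \<or> odd_leaf_tree t) ts"
proof -
  have child: "(\<forall>d\<in>leaf_depths 0 t. d = 0 \<or> odd d) \<longleftrightarrow> t = Node [] \<or> odd_leaf_tree t" for t
  proof (cases t)
    case (Node us)
    then show ?thesis
      by (cases "us = []") (auto simp: leaf_depths_Suc odd_leaf_tree_iff)
  qed
  show ?thesis
    by (cases "ts = []") (auto simp: retakh_tree_def leaf_depths_Suc list_all_iff child[symmetric])
qed

section \<open>Solving the functional equations\<close>

lemma quadratic_of_odd_even_system:
  fixes f g x :: "'a::comm_ring_1"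
  assumes g: "g * (1 - f) = x" and f: "f * (1 - g) = x * g"
  shows "f = x^2 + x * f + f^2"
proof -
  have "f = f * (1 - g) + f * g" by (simp add: algebra_simps)
  also have "\<dots> = g * (x + f)" using f by (simp add: algebra_simps)
  finally have "f * (1 - f) = g * (1 - f) * (x + f)" by (metis mult.commute mult.assoc)
  then have "f * (1 - f) = x * (x + f)" using g by simp
  then show ?thesis by (simp add: algebra_simps power2_eq_square)
qed

lemma fps_quadratic_unique:
  fixes f g :: "'a::field fps"
  assumes "fps_nth f 0 = 0" "fps_nth g 0 = 0"
    and "f = fps_X^2 + fps_X * f + f^2" "g = fps_X^2 + fps_X * g + g^2"
  shows "f = g"
proof -
  have "(f - g) * (1 - fps_X - f - g) = (f - fps_X * f - f^2) - (g - fps_X * g - g^2)"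
    by (simp add: algebra_simps power2_eq_square)
  also have "f - fps_X * f - f^2 = fps_X^2" by (subst (1) assms(3)) (simp add: algebra_simps)
  also have "g - fps_X * g - g^2 = fps_X^2" by (subst (1) assms(4)) (simp add: algebra_simps)
  finally have "(f - g) * (1 - fps_X - f - g) = 0" by simp
  moreover have "1 - fps_X - f - g \<noteq> 0"
    using arg_cong[of _ 0 "\<lambda>p. fps_nth p 0"] assms(1,2) by force
  ultimately show ?thesis by simp
qed

lemma motzkin_fps_eq: "motzkin_fps = 1 + fps_X * motzkin_fps + fps_X^2 * motzkin_fps^2"
proof (rule fps_ext)
  fix n
  show "fps_nth motzkin_fps n = fps_nth (1 + fps_X * motzkin_fps + fps_X^2 * motzkin_fps^2) n"
  proof (cases n)
    case (Suc m)
    show ?thesis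
    proof (cases m)
      case (Suc k)
      have "(\<Sum>i<Suc k. motzkin i * motzkin (Suc k - 1 - i)) = (\<Sum>i=0..k. motzkin i * motzkin (k - i))"
        by (simp add: lessThan_Suc_atMost atLeast0AtMost)
      then have "of_nat (motzkin (Suc (Suc k))) = (of_nat (motzkin (Suc k)) :: rat)
          + (\<Sum>i=0..k. of_nat (motzkin i) * of_nat (motzkin (k - i)))"
        by (simp only: motzkin.simps of_nat_add of_nat_sum of_nat_mult)
      moreover have "fps_nth (motzkin_fps^2) k = (\<Sum>i=0..k. of_nat (motzkin i) * of_nat (motzkin (k - i)))"
        by (simp add: power2_eq_square fps_mult_nth motzkin_fps_def)
      ultimately show ?thesis
        using \<open>n = Suc m\<close> Suc by (simp add: motzkin_fps_def fps_X_power_mult_nth)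
    qed (simp add: Suc motzkin_fps_def fps_X_power_mult_nth)
  qed (simp add: motzkin_fps_def fps_X_power_mult_nth)
qed

lemma is_unit_one_minus_tree_gf: "is_unit (1 - tree_gf P)"
  by (simp add: tree_gf_nth_0)

lemma even_leaf_tree_gf: "tree_gf even_leaf_tree = fps_X / (1 - tree_gf odd_leaf_tree)"
  by (rule tree_gf_Node_forest) (rule even_leaf_tree_Node)

lemma odd_leaf_tree_gf:
  "tree_gf odd_leaf_tree = fps_X * tree_gf even_leaf_tree / (1 - tree_gf even_leaf_tree)"
  by (rule tree_gf_Node_nonempty_forest) (rule odd_leaf_tree_Node)

lemma odd_leaf_tree_gf_motzkin: "tree_gf odd_leaf_tree = fps_X^2 * motzkin_fps"
proof (rule fps_quadratic_unique)
  show "tree_gf odd_leaf_tree = fps_X^2 + fps_X * tree_gf odd_leaf_tree + (tree_gf odd_leaf_tree)^2"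
  proof (rule quadratic_of_odd_even_system)
    show "tree_gf even_leaf_tree * (1 - tree_gf odd_leaf_tree) = fps_X"
      by (subst even_leaf_tree_gf) (rule unit_div_mult_self[OF is_unit_one_minus_tree_gf])
    show "tree_gf odd_leaf_tree * (1 - tree_gf even_leaf_tree) = fps_X * tree_gf even_leaf_tree"
      by (subst odd_leaf_tree_gf) (rule unit_div_mult_self[OF is_unit_one_minus_tree_gf])
  qed
  show "fps_X^2 * motzkin_fps = fps_X^2 + fps_X * (fps_X^2 * motzkin_fps) + (fps_X^2 * motzkin_fps)^2"
    by (subst (1) motzkin_fps_eq) (simp add: algebra_simps power2_eq_square)
qed (simp_all add: tree_gf_nth_0 fps_X_power_mult_nth)

lemma retakh_tree_gf: "tree_gf retakh_tree = fps_X * motzkin_fps"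
proof -
  have "tree_gf retakh_tree = fps_X / (1 - tree_gf (\<lambda>t. t = Node [] \<or> odd_leaf_tree t))"
    by (rule tree_gf_Node_forest) (rule retakh_tree_Node)
  also have "\<dots> = fps_X / (1 - (fps_X + fps_X^2 * motzkin_fps))"
    by (simp add: tree_gf_leaf_or odd_leaf_tree_Node odd_leaf_tree_gf_motzkin)
  also have "\<dots> = fps_X * motzkin_fps"
  proof (rule fps_divide_eq_mult_right_inverse)
    have "(1 - (fps_X + fps_X^2 * motzkin_fps)) * motzkin_fps
        = motzkin_fps - fps_X * motzkin_fps - fps_X^2 * motzkin_fps^2"
      by (simp add: algebra_simps power2_eq_square)
    also have "\<dots> = 1" by (subst (1) motzkin_fps_eq) (simp add: algebra_simps)
    finally show "(1 - (fps_X + fps_X^2 * motzkin_fps)) * motzkin_fps = 1" .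
  qed
  finally show ?thesis .
qed

section \<open>Dyck paths and their peaks\<close>

lemma height_Nil [simp]: "height [] = 0"
  by (simp add: height_def)

lemma height_Cons [simp]: "height (x # xs) = (if x then 1 else -1) + height xs"
  by (simp add: height_def)

lemma height_append [simp]: "height (xs @ ys) = height xs + height ys"
  by (simp add: height_def)

definition peak_levels :: "bool list \<Rightarrow> int set" where
  "peak_levels xs = {peak_level xs i | i. is_peak xs i}"

lemma peak_levels_Nil [simp]: "peak_levels [] = {}"
  by (simp add: peak_levels_def is_peak_def)

lemma peak_levels_Cons:
  "peak_levels (x # xs) =
     (if x \<and> xs \<noteq> [] \<and> \<not> hd xs then {1} else {}) \<union> (+) (if x then 1 else -1) ` peak_levels xs"
proof (rule set_eqI, rule iffI)
  fix l assume "l \<in> peak_levels (x # xs)"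
  then obtain i where "is_peak (x # xs) i" "l = peak_level (x # xs) i"
    by (auto simp: peak_levels_def)
  then show "l \<in> (if x \<and> xs \<noteq> [] \<and> \<not> hd xs then {1} else {}) \<union> (+) (if x then 1 else -1) ` peak_levels xs"
    by (cases i) (auto simp: peak_levels_def is_peak_def peak_level_def hd_conv_nth)
next
  fix l assume "l \<in> (if x \<and> xs \<noteq> [] \<and> \<not> hd xs then {1} else {}) \<union> (+) (if x then 1 else -1) ` peak_levels xs"
  then show "l \<in> peak_levels (x # xs)"
    unfolding peak_levels_def
  proof (elim UnE imageE)
    fix l' assume "l' \<in> {peak_level xs i |i. is_peak xs i}" and l: "l = (if x then 1 else -1) + l'"
    then obtain i where "is_peak xs i" "l' = peak_level xs i" by blast
    with l have "is_peak (x # xs) (Suc i) \<and> l = peak_level (x # xs) (Suc i)"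
      by (simp add: is_peak_def peak_level_def)
    then show "l \<in> {peak_level (x # xs) i |i. is_peak (x # xs) i}" by blast
  qed (auto simp: is_peak_def peak_level_def hd_conv_nth intro!: exI[where x=0] split: if_splits)
qed

lemma peak_levels_append:
  "xs = [] \<or> \<not> last xs \<Longrightarrow> peak_levels (xs @ ys) = peak_levels xs \<union> (+) (height xs) ` peak_levels ys"
proof (induction xs)
  case (Cons x xs)
  then show ?case
    by (cases "xs = []") (auto simp: peak_levels_Cons image_Un image_image add.assoc)
qed simp

lemma peak_levels_concat:
  assumes "\<And>xs. xs \<in> set xss \<Longrightarrow> height xs = 0 \<and> (xs = [] \<or> \<not> last xs)"
  shows "peak_levels (concat xss) = (\<Union>xs\<in>set xss. peak_levels xs)"
  using assms by (induction xss) (auto simp: peak_levels_append)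

lemma dyck_path_height_take_nonneg: "dyck_path xs \<Longrightarrow> height (take k xs) \<ge> 0"
  unfolding dyck_path_def by (cases "k \<le> length xs") auto

lemma dyck_path_Nil: "dyck_path []"
  by (simp add: dyck_path_def)

lemma dyck_path_lift_append:
  assumes a: "dyck_path a" and b: "dyck_path b"
  shows "dyck_path (True # a @ False # b)"
proof -
  have "height (take k (True # a @ False # b)) \<ge> 0" for k
  proof (cases "k \<le> Suc (length a)")
    case True
    then show ?thesis using dyck_path_height_take_nonneg[OF a, of "k - 1"] by (cases k) auto
  next
    case False
    then have "take k (True # a @ False # b) = True # a @ False # take (k - length a - 2) b"
      by (simp add: take_Cons' numeral_2_eq_2)
    then show ?thesis using dyck_path_height_take_nonneg[OF b] a by (simp add: dyck_path_def)
  qed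
  then show ?thesis using a b by (simp add: dyck_path_def)
qed

lemma dyck_path_first_return_unique:
  assumes "dyck_path a" "dyck_path a'" "a @ False # b = a' @ False # b'"
  shows "a = a' \<and> b = b'"
proof -
  have "length a' \<le> length a"
    if "dyck_path a" "dyck_path a'" "a @ False # b = a' @ False # b'" for a a' b b'
  proof (rule ccontr)
    assume "\<not> length a' \<le> length a"
    then have "take (Suc (length a)) a' = a @ [False]"
      using arg_cong[OF that(3), of "take (Suc (length a))"] by simp
    then have "height (take (Suc (length a)) a') < 0"
      using \<open>dyck_path a\<close> by (simp add: dyck_path_def)
    with dyck_path_height_take_nonneg[OF \<open>dyck_path a'\<close>] show False by (simp add: not_le[symmetric])
  qed
  from this[OF assms] this[OF assms(2,1) assms(3)[symmetric]] assms(3) show ?thesis by simp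
qed

lemma dyck_path_first_return_exists:
  "height xs < 0 \<Longrightarrow> \<exists>a b. xs = a @ False # b \<and> dyck_path a"
proof (induction "length xs" arbitrary: xs rule: less_induct)
  case less
  show ?case
  proof (cases xs)
    case (Cons x xs')
    show ?thesis
    proof (cases x)
      case False
      then show ?thesis using Cons dyck_path_Nil by auto
    next
      case True
      then have "height xs' < 0" using less.prems Cons by simp
      then obtain a1 b1 where first: "xs' = a1 @ False # b1" "dyck_path a1"
        using less.hyps[of xs'] Cons by auto
      then have "height b1 < 0" using less.prems Cons True by (simp add: dyck_path_def)
      then obtain a2 b2 where second: "b1 = a2 @ False # b2" "dyck_path a2"
        using less.hyps[of b1] first Cons by auto
      have "xs = (True # a1 @ False # a2) @ False # b2" using Cons True first second by simp
      with dyck_path_lift_append[OF first(2) second(2)] show ?thesis by blast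
    qed
  qed (use less.prems in simp)
qed

section \<open>Plane trees as Dyck paths\<close>

fun dyck_of :: "ptree \<Rightarrow> bool list" where
  "dyck_of (Node ts) = concat (map (\<lambda>t. True # dyck_of t @ [False]) ts)"

lemma dyck_of_Node_Nil [simp]: "dyck_of (Node []) = []"
  by simp

lemma dyck_of_Node_Cons [simp]:
  "dyck_of (Node (t # ts)) = True # dyck_of t @ False # dyck_of (Node ts)"
  by simp

declare dyck_of.simps [simp del]

lemma length_dyck_of: "length (dyck_of t) + 2 = 2 * nodes t"
proof (induction t)
  case (Node ts)
  then show ?case by (induction ts) auto
qed

lemma dyck_path_dyck_of: "dyck_path (dyck_of t)"
proof (induction t)
  case (Node ts)
  then show ?case by (induction ts) (auto simp: dyck_path_Nil dyck_path_lift_append)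
qed

lemma height_dyck_of: "height (dyck_of t) = 0"
  using dyck_path_dyck_of[of t] by (simp add: dyck_path_def)

lemma last_dyck_of: "dyck_of t = [] \<or> \<not> last (dyck_of t)"
proof (cases t)
  case (Node ts)
  then show ?thesis by (induction ts arbitrary: t) auto
qed

lemma dyck_of_inj: "dyck_of s = dyck_of t \<Longrightarrow> s = t"
proof (induction s arbitrary: t)
  case (Node ss)
  from Node.IH Node.prems show ?case
  proof (induction ss arbitrary: t)
    case Nil
    then show ?case by (cases t, rename_tac ts, case_tac ts) auto
  next
    case (Cons s ss t)
    obtain u us where t: "t = Node (u # us)"
      using Cons.prems(2) by (cases t, rename_tac ts, case_tac ts) auto
    with Cons.prems(2) have "dyck_of s @ False # dyck_of (Node ss) = dyck_of u @ False # dyck_of (Node us)"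
      by simp
    then have heads: "dyck_of s = dyck_of u" and tails: "dyck_of (Node ss) = dyck_of (Node us)"
      using dyck_path_first_return_unique[OF dyck_path_dyck_of dyck_path_dyck_of] by blast+
    from heads Cons.prems(1) have "s = u" by simp
    moreover from tails Cons.prems(1) Cons.IH have "Node ss = Node us" by simp
    ultimately show ?case by (simp add: t)
  qed
qed

lemma dyck_path_imp_dyck_of: "dyck_path xs \<Longrightarrow> \<exists>t. dyck_of t = xs"
proof (induction "length xs" arbitrary: xs rule: less_induct)
  case less
  show ?case
  proof (cases xs)
    case Nil
    then show ?thesis using dyck_of_Node_Nil by blast
  next
    case (Cons x xs')
    have prefix: "height (take k xs) \<ge> 0" for k
      using dyck_path_height_take_nonneg[OF less.prems] .
    from prefix[of 1] Cons have x by (cases x) simp_all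
    with less.prems Cons have "height xs' < 0" by (simp add: dyck_path_def)
    then obtain a b where ab: "xs' = a @ False # b" "dyck_path a"
      using dyck_path_first_return_exists by blast
    have "height (take k b) \<ge> 0" for k
    proof -
      have "take (length a + 2 + k) xs = True # a @ False # take k b"
        using Cons \<open>x\<close> ab by simp
      then show ?thesis using prefix[of "length a + 2 + k"] ab(2) by (simp add: dyck_path_def)
    qed
    then have "dyck_path b" using less.prems Cons \<open>x\<close> ab by (simp add: dyck_path_def)
    obtain s where s: "dyck_of s = a" using less.hyps ab Cons by fastforce
    obtain u where "dyck_of u = b" using less.hyps[of b] \<open>dyck_path b\<close> ab Cons by auto
    then obtain us where us: "dyck_of (Node us) = b" by (cases u) blast
    have "dyck_of (Node (s # us)) = xs" using s us Cons \<open>x\<close> ab by simp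
    then show ?thesis by blast
  qed
qed

text \<open>Depth \<open>0\<close> is removed because the root of the one-node tree is a leaf, while the
  empty path has no peak.\<close>

lemma peak_levels_dyck_of: "peak_levels (dyck_of t) = int ` (leaf_depths 0 t - {0})"
proof (induction t)
  case (Node ts)
  have lifted: "peak_levels (True # dyck_of u @ [False]) = int ` leaf_depths (Suc 0) u" if "u \<in> set ts" for u
  proof -
    obtain us where u: "u = Node us" by (cases u)
    show ?thesis
    proof (cases us)
      case Nil
      then show ?thesis using u by (simp add: peak_levels_Cons)
    next
      case (Cons v vs)
      obtain r where r: "dyck_of u = True # r" using u Cons by simp
      have "peak_levels (True # dyck_of u @ [False]) = (+) 1 ` peak_levels (dyck_of u @ [False])"
        by (simp add: r peak_levels_Cons)
      also have "\<dots> = (+) 1 ` peak_levels (dyck_of u)"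
        using last_dyck_of[of u] by (simp add: peak_levels_append peak_levels_Cons)
      also have "\<dots> = (+) 1 ` int ` (leaf_depths 0 u - {0})"
        using Node.IH that by simp
      also have "\<dots> = int ` leaf_depths (Suc 0) u"
      proof -
        have "0 \<notin> leaf_depths 0 u" using u Cons by (auto simp: leaf_depths_Suc)
        then show ?thesis by (simp add: leaf_depths_Suc image_image)
      qed
      finally show ?thesis .
    qed
  qed
  have "peak_levels (dyck_of (Node ts))
      = (\<Union>xs\<in>set (map (\<lambda>u. True # dyck_of u @ [False]) ts). peak_levels xs)"
    unfolding dyck_of.simps by (rule peak_levels_concat) (auto simp: height_dyck_of)
  also have "\<dots> = (\<Union>u\<in>set ts. peak_levels (True # dyck_of u @ [False]))"
    by (simp add: image_image)
  also have "\<dots> = (\<Union>u\<in>set ts. int ` leaf_depths (Suc 0) u)"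
    using lifted by simp
  also have "\<dots> = int ` (leaf_depths 0 (Node ts) - {0})"
    by (cases "ts = []") (auto simp: leaf_depths_Suc)
  finally show ?case .
qed

lemma retakh_path_dyck_of: "retakh_path (dyck_of t) \<longleftrightarrow> retakh_tree t"
proof -
  have "retakh_path xs \<longleftrightarrow> dyck_path xs \<and> (\<forall>l\<in>peak_levels xs. l = 1 \<or> even l)" for xs
    by (auto simp: retakh_path_def peak_levels_def)
  then show ?thesis
    by (auto simp: dyck_path_dyck_of peak_levels_dyck_of retakh_tree_def)
qed

lemma card_retakh_paths: "card (retakh_paths n) = card {t. nodes t = Suc n \<and> retakh_tree t}"
proof -
  have "retakh_paths n = dyck_of ` {t. nodes t = Suc n \<and> retakh_tree t}"
  proof
    show "retakh_paths n \<subseteq> dyck_of ` {t. nodes t = Suc n \<and> retakh_tree t}"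
    proof
      fix xs assume "xs \<in> retakh_paths n"
      then have xs: "length xs = 2 * n" "retakh_path xs" by (auto simp: retakh_paths_def)
      then obtain t where t: "dyck_of t = xs"
        using dyck_path_imp_dyck_of by (auto simp: retakh_path_def)
      with xs length_dyck_of[of t] retakh_path_dyck_of[of t]
      show "xs \<in> dyck_of ` {t. nodes t = Suc n \<and> retakh_tree t}" by auto
    qed
  next
    show "dyck_of ` {t. nodes t = Suc n \<and> retakh_tree t} \<subseteq> retakh_paths n"
    proof
      fix xs assume "xs \<in> dyck_of ` {t. nodes t = Suc n \<and> retakh_tree t}"
      then obtain t where "xs = dyck_of t" "nodes t = Suc n" "retakh_tree t" by blast
      with length_dyck_of[of t] retakh_path_dyck_of[of t] show "xs \<in> retakh_paths n"
        by (simp add: retakh_paths_def)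
    qed
  qed
  moreover have "inj_on dyck_of X" for X by (auto intro: inj_onI dyck_of_inj)
  ultimately show ?thesis by (simp add: card_image)
qed

theorem mainTheorem1:
  shows "(\<forall>n. card (retakh_paths n) = motzkin n)
       \<and> (\<forall>n. card {t. nodes t = Suc n \<and> retakh_tree t} = motzkin n)
       \<and> motzkin_fps = 1 + fps_X * motzkin_fps + fps_X ^ 2 * motzkin_fps ^ 2
       \<and> tree_gf retakh_tree = fps_X * motzkin_fps
       \<and> tree_gf odd_leaf_tree = fps_X * tree_gf even_leaf_tree / (1 - tree_gf even_leaf_tree)
       \<and> tree_gf even_leaf_tree = fps_X / (1 - tree_gf odd_leaf_tree)
       \<and> tree_gf odd_leaf_tree = fps_X ^ 2 * motzkin_fps"
proof -
  have trees: "card {t. nodes t = Suc n \<and> retakh_tree t} = motzkin n" for n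
    using arg_cong[OF retakh_tree_gf, of "\<lambda>f. fps_nth f (Suc n)"]
    by (simp add: tree_gf_nth trees_def motzkin_fps_def)
  show ?thesis
    using trees card_retakh_paths motzkin_fps_eq retakh_tree_gf odd_leaf_tree_gf even_leaf_tree_gf
      odd_leaf_tree_gf_motzkin
    by simp
qed

end
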